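(* Let $H$ be a graph with minimum degree $\delta(H)>|V(H)|/2$. Then for every graph $G$, \[ \kappa'(G\times H)=\min\{\,2\kappa'(G)\,e(H),\ \delta(G)\delta(H)\,\}. \]
   Context: All graphs are finite, simple and undirected. $\kappa'(G)$ denotes the edge connectivity of $G$, the minimum number of edges whose removal disconnects $G$; it is $0$ if $G$ is disconnected or has only one vertex. $\delta(\cdot)$ denotes minimum degree and $e(H)=|E(H)|$. The direct product $G\times H$ has vertex set $V(G)\times V(H)$. Two vertices $(x,u),(y,v)$ are adjacent if and only if $xy\in E(G)$ and $uv\in E(H)$. *)

theory Defs
  imports Complex_Main
begin

definition graph :: "'a set \<Rightarrow> 'a set set \<Rightarrow> bool" where
  "graph V E \<longleftrightarrow> finite V \<and> (\<forall>e\<in>E. e \<subseteq> V \<and> card e = 2)"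

definition adj :: "'a set set \<Rightarrow> 'a \<Rightarrow> 'a \<Rightarrow> bool" where
  "adj E u v \<longleftrightarrow> {u, v} \<in> E"

definition connected_graph :: "'a set \<Rightarrow> 'a set set \<Rightarrow> bool" where
  "connected_graph V E \<longleftrightarrow> V \<noteq> {} \<and> (\<forall>u\<in>V. \<forall>v\<in>V. (adj E)\<^sup>*\<^sup>* u v)"

text \<open>Edge connectivity: minimum number of edges whose removal disconnects the graph;
0 if the graph is disconnected or has at most one vertex.\<close>
definition edge_conn :: "'a set \<Rightarrow> 'a set set \<Rightarrow> nat" where
  "edge_conn V E =
     (if card V \<le> 1 then 0
      else Min {card F | F. F \<subseteq> E \<and> \<not> connected_graph V (E - F)})"

definition degree :: "'a set set \<Rightarrow> 'a \<Rightarrow> nat" where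
  "degree E v = card {e \<in> E. v \<in> e}"

definition min_degree :: "'a set \<Rightarrow> 'a set set \<Rightarrow> nat" where
  "min_degree V E = Min (degree E ` V)"

definition prod_verts :: "'a set \<Rightarrow> 'b set \<Rightarrow> ('a \<times> 'b) set" where
  "prod_verts VG VH = VG \<times> VH"

definition prod_edges :: "'a set set \<Rightarrow> 'b set set \<Rightarrow> ('a \<times> 'b) set set" where
  "prod_edges EG EH = {{(x, u), (y, v)} | x y u v. {x, y} \<in> EG \<and> {u, v} \<in> EH}"

end

theory Submission
  imports Defs
begin

(* Deleting all edges at a vertex (x,u) disconnects G \<times> H, and that vertex has
   degree at most deg x * deg u.  Lifting a minimum edge cut of G, i.e. the edges of G leaving a
   vertex set S, to the set S \<times> V(H) yields a cut of G \<times> H with exactly 2 e(H) edges per cut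
   edge of G (one per orientation of each edge of H).

   A disconnecting edge set F contains all edges leaving some vertex set S.  If
   some fibre {u. (x,u) \<in> S} is neither empty nor all of V(H), then for every neighbour y of x
   the density of H forces at least \<delta>(H) cut edges between the fibres over x and y, giving
   \<delta>(G) \<delta>(H) in total.  Otherwise S = A \<times> V(H), and the cut is the lift of the cut of A in G. *)

lemma graph_finite_edges:
  assumes "graph V E"
  shows "finite E"
proof -
  have "E \<subseteq> Pow V" and "finite V" using assms unfolding graph_def by auto
  then show ?thesis by (meson finite_Pow_iff finite_subset)
qed

lemma graph_edge_ends:
  assumes "graph V E" and "{u, v} \<in> E"
  shows "u \<in> V" and "v \<in> V" and "u \<noteq> v"
proof -
  have "{u, v} \<subseteq> V" and card: "card {u, v} = 2" using assms unfolding graph_def by auto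
  then show "u \<in> V" and "v \<in> V" by auto
  show "u \<noteq> v" using card by (cases "u = v") auto
qed

lemma two_le_card_if_distinct:
  assumes "finite V" and "a \<in> V" and "b \<in> V" and "a \<noteq> b"
  shows "2 \<le> card V"
  using assms card_le_Suc0_iff_eq[of V] by fastforce

lemma obtain_other_element:
  assumes "2 \<le> card V" and "v \<in> V"
  obtains w where "w \<in> V" and "w \<noteq> v"
proof -
  have "card (V - {v}) \<noteq> 0" using assms by (simp add: card_Diff_singleton_if)
  then have "V - {v} \<noteq> {}" by (metis card.empty)
  then show thesis using that by blast
qed

definition nbr :: "'a set set \<Rightarrow> 'a \<Rightarrow> 'a set" where
  "nbr E u = {v. {u, v} \<in> E}"

lemma nbr_subset: "graph V E \<Longrightarrow> nbr E u \<subseteq> V"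
  unfolding nbr_def using graph_edge_ends by fastforce

lemma finite_nbr: "graph V E \<Longrightarrow> finite (nbr E u)"
  using nbr_subset unfolding graph_def by (metis finite_subset)

lemma degree_eq_card_nbr:
  assumes "graph V E"
  shows "degree E u = card (nbr E u)"
proof -
  have "bij_betw (\<lambda>v. {u, v}) (nbr E u) {e \<in> E. u \<in> e}"
  proof (rule bij_betwI')
    fix v w assume "v \<in> nbr E u" "w \<in> nbr E u"
    then show "({u, v} = {u, w}) = (v = w)"
      unfolding nbr_def using graph_edge_ends(3)[OF assms] by (metis doubleton_eq_iff)
  next
    fix v assume "v \<in> nbr E u"
    then show "{u, v} \<in> {e \<in> E. u \<in> e}" unfolding nbr_def by simp
  next
    fix e assume e: "e \<in> {e \<in> E. u \<in> e}"
    then have "card e = 2" using assms unfolding graph_def by simp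
    then obtain a b where "e = {a, b}" by (meson card_2_iff)
    then show "\<exists>v\<in>nbr E u. e = {u, v}" using e unfolding nbr_def by (auto simp: insert_commute)
  qed
  then show ?thesis unfolding degree_def by (simp add: bij_betw_same_card)
qed

lemma card_ge_2_if_degree_pos:
  assumes g: "graph V E" and "degree E v \<noteq> 0"
  shows "2 \<le> card V"
proof -
  have "nbr E v \<noteq> {}" using assms degree_eq_card_nbr[OF g] by force
  then obtain w where "{v, w} \<in> E" unfolding nbr_def by blast
  moreover have "finite V" using g unfolding graph_def by simp
  ultimately show ?thesis using graph_edge_ends[OF g] two_le_card_if_distinct by metis
qed

lemma min_degree_le: "finite V \<Longrightarrow> v \<in> V \<Longrightarrow> min_degree V E \<le> degree E v"
  unfolding min_degree_def by simp

lemma min_degree_attained: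
  assumes "finite V" and "V \<noteq> {}"
  obtains v where "v \<in> V" and "degree E v = min_degree V E"
  using assms Min_in[of "degree E ` V"] unfolding min_degree_def by fastforce

definition edges_between :: "'a set set \<Rightarrow> 'a set \<Rightarrow> 'a set \<Rightarrow> ('a \<times> 'a) set" where
  "edges_between E P Q = {(u, v). u \<in> P \<and> v \<in> Q \<and> {u, v} \<in> E}"

lemma finite_edges_between:
  assumes "graph V E"
  shows "finite (edges_between E P Q)"
proof (rule finite_subset)
  show "edges_between E P Q \<subseteq> V \<times> V"
    unfolding edges_between_def using graph_edge_ends[OF assms] by auto
  show "finite (V \<times> V)" using assms unfolding graph_def by simp
qed

lemma card_edges_between_sym: "card (edges_between E P Q) = card (edges_between E Q P)"
proof -
  have "edges_between E P Q = prod.swap ` edges_between E Q P"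
    unfolding edges_between_def by (auto simp: insert_commute image_iff)
  then show ?thesis by (simp add: card_image)
qed

lemma card_edges_between_ge:
  assumes g: "graph V E" and "P \<subseteq> V" and "Q \<subseteq> V" and deg: "\<forall>u\<in>V. d \<le> degree E u"
  shows "card P * (d - card (V - Q)) \<le> card (edges_between E P Q)"
proof -
  have finV: "finite V" using g unfolding graph_def by simp
  have "edges_between E P Q = Sigma P (\<lambda>u. nbr E u \<inter> Q)"
    unfolding edges_between_def nbr_def by auto
  then have count: "card (edges_between E P Q) = (\<Sum>u\<in>P. card (nbr E u \<inter> Q))"
    using finite_subset[OF \<open>P \<subseteq> V\<close> finV] finite_nbr[OF g] by (simp add: card_SigmaI)
  have "d - card (V - Q) \<le> card (nbr E u \<inter> Q)" if "u \<in> P" for u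
  proof -
    have "nbr E u \<subseteq> (nbr E u \<inter> Q) \<union> (V - Q)" using nbr_subset[OF g] by auto
    then have "card (nbr E u) \<le> card (nbr E u \<inter> Q) + card (V - Q)"
      by (meson card_Un_le card_mono order_trans finV finite_Diff finite_Int finite_UnI finite_nbr[OF g])
    moreover have "d \<le> card (nbr E u)"
      using deg that \<open>P \<subseteq> V\<close> degree_eq_card_nbr[OF g] by auto
    ultimately show ?thesis by linarith
  qed
  then show ?thesis unfolding count using sum_mono[of P "\<lambda>_. d - card (V - Q)"] by (simp add: mult.commute)
qed

definition darts :: "'a set set \<Rightarrow> ('a \<times> 'a) set" where
  "darts E = {(u, v). {u, v} \<in> E}"

lemma card_darts:
  assumes "graph V E"
  shows "card (darts E) = 2 * card E"
proof -
  have two_orientations: "card {(u, v). e = {u, v}} = 2" if "e \<in> E" for e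
  proof -
    have "card e = 2" using that assms unfolding graph_def by simp
    then obtain a b where "a \<noteq> b" "e = {a, b}" by (meson card_2_iff)
    then have "{(u, v). e = {u, v}} = {(a, b), (b, a)}" by (auto simp: doubleton_eq_iff)
    then show ?thesis using \<open>a \<noteq> b\<close> by simp
  qed
  have "darts E = (\<Union>e\<in>E. {(u, v). e = {u, v}})" unfolding darts_def by auto
  also have "card \<dots> = (\<Sum>e\<in>E. card {(u, v). e = {u, v}})"
  proof (rule card_UN_disjoint[OF graph_finite_edges[OF assms]])
    show "\<forall>e\<in>E. finite {(u, v). e = {u, v}}"
      using two_orientations by (metis card.infinite zero_neq_numeral)
  qed auto
  finally show ?thesis using two_orientations by simp
qed

definition cut_edges :: "'a set set \<Rightarrow> 'a set \<Rightarrow> 'a set set" where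
  "cut_edges E S = (\<lambda>(u, v). {u, v}) ` edges_between E S (- S)"

lemma cut_edgesI: "{u, v} \<in> E \<Longrightarrow> u \<in> S \<Longrightarrow> v \<notin> S \<Longrightarrow> {u, v} \<in> cut_edges E S"
  unfolding cut_edges_def edges_between_def by force

lemma cut_edges_subset: "cut_edges E S \<subseteq> E"
  unfolding cut_edges_def edges_between_def by auto

(* A cut edge has a unique orientation from S to its complement. *)
lemma card_cut_edges: "card (cut_edges E S) = card (edges_between E S (- S))"
  unfolding cut_edges_def
  by (rule card_image) (auto simp: inj_on_def edges_between_def doubleton_eq_iff)

lemma reachable_closed:
  assumes "(adj E)\<^sup>*\<^sup>* p q" and "p \<in> A" and "\<And>z w. z \<in> A \<Longrightarrow> adj E z w \<Longrightarrow> w \<in> A"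
  shows "q \<in> A"
  using assms(1) by (induction rule: rtranclp_induct) (use assms in auto)

lemma cut_disconnects:
  assumes "p \<in> V" and "q \<in> V" and "p \<in> S" and "q \<notin> S"
  shows "\<not> connected_graph V (E - cut_edges E S)"
proof
  assume "connected_graph V (E - cut_edges E S)"
  then have "(adj (E - cut_edges E S))\<^sup>*\<^sup>* p q" using assms unfolding connected_graph_def by blast
  then have "q \<in> S"
  proof (rule reachable_closed)
    fix z w assume "z \<in> S" and "adj (E - cut_edges E S) z w"
    then show "w \<in> S" unfolding adj_def using cut_edgesI[of z w E S] by blast
  qed (use assms in simp)
  then show False using assms by simp
qed

(* Conversely, a disconnecting edge set contains all edges leaving some proper vertex set S,
   namely the component of a vertex in the remaining graph. *)
lemma disconnected_cut:
  assumes g: "graph V E" and "V \<noteq> {}" and "\<not> connected_graph V (E - F)"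
  obtains S p q where "S \<subseteq> V" and "p \<in> S" and "q \<in> V" and "q \<notin> S" and "cut_edges E S \<subseteq> F"
proof -
  obtain p q where pq: "p \<in> V" "q \<in> V" "\<not> (adj (E - F))\<^sup>*\<^sup>* p q"
    using assms(2,3) unfolding connected_graph_def by blast
  define S where "S = {z \<in> V. (adj (E - F))\<^sup>*\<^sup>* p z}"
  have "e \<in> F" if e: "e \<in> cut_edges E S" for e
  proof -
    obtain u v where uv: "e = {u, v}" "{u, v} \<in> E" "u \<in> S" "v \<notin> S"
      using e unfolding cut_edges_def edges_between_def by auto
    have "v \<in> V" using graph_edge_ends[OF g uv(2)] by simp
    show "e \<in> F"
    proof (rule ccontr)
      assume "e \<notin> F"
      then have "adj (E - F) u v" using uv unfolding adj_def by simp
      then have "v \<in> S" using uv(3) \<open>v \<in> V\<close> unfolding S_def by auto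
      then show False using uv(4) by simp
    qed
  qed
  then show thesis using that[of S p q] pq unfolding S_def by auto
qed

lemma edge_conn_Min:
  assumes "2 \<le> card V"
  shows "edge_conn V E = Min {card F | F. F \<subseteq> E \<and> \<not> connected_graph V (E - F)}"
  using assms unfolding edge_conn_def by simp

(* For at least two vertices the minimum in the definition of edge connectivity ranges over a
   finite nonempty set (deleting the edges at one vertex disconnects it). *)
lemma disconnecting_sizes:
  assumes g: "graph V E" and "2 \<le> card V"
  shows "finite {card F | F. F \<subseteq> E \<and> \<not> connected_graph V (E - F)}"
    and "{card F | F. F \<subseteq> E \<and> \<not> connected_graph V (E - F)} \<noteq> {}"
proof -
  have "{card F | F. F \<subseteq> E \<and> \<not> connected_graph V (E - F)} \<subseteq> card ` Pow E" by auto
  then show "finite {card F | F. F \<subseteq> E \<and> \<not> connected_graph V (E - F)}"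
    using graph_finite_edges[OF g] finite_subset by blast
  obtain p where "p \<in> V" using assms(2) by fastforce
  moreover obtain q where "q \<in> V" "q \<noteq> p" using obtain_other_element[OF assms(2) \<open>p \<in> V\<close>] .
  ultimately have "\<not> connected_graph V (E - cut_edges E {p})"
    using cut_disconnects[of p V q "{p}" E] by simp
  then show "{card F | F. F \<subseteq> E \<and> \<not> connected_graph V (E - F)} \<noteq> {}"
    using cut_edges_subset by blast
qed

lemma edge_conn_le:
  assumes "graph V E" and "2 \<le> card V" and "F \<subseteq> E" and "\<not> connected_graph V (E - F)"
  shows "edge_conn V E \<le> card F"
  unfolding edge_conn_Min[OF assms(2)]
  using disconnecting_sizes(1)[OF assms(1,2)] assms(3,4) by (auto intro: Min_le)

lemma edge_conn_ge:
  assumes "graph V E" and "2 \<le> card V"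
    and "\<And>F. F \<subseteq> E \<Longrightarrow> \<not> connected_graph V (E - F) \<Longrightarrow> m \<le> card F"
  shows "m \<le> edge_conn V E"
  unfolding edge_conn_Min[OF assms(2)]
  using disconnecting_sizes[OF assms(1,2)] assms(3) by (auto simp: Min_ge_iff)

lemma edge_conn_attained:
  assumes "graph V E" and "2 \<le> card V"
  obtains F where "F \<subseteq> E" and "\<not> connected_graph V (E - F)" and "card F = edge_conn V E"
  using Min_in[OF disconnecting_sizes[OF assms]] that unfolding edge_conn_Min[OF assms(2)] by auto

lemma edge_conn_le_cut:
  assumes g: "graph V E" and "p \<in> V" and "q \<in> V" and "p \<in> S" and "q \<notin> S"
  shows "edge_conn V E \<le> card (cut_edges E S)"
proof -
  have "finite V" and "p \<noteq> q" using g assms(4,5) unfolding graph_def by auto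
  then have "2 \<le> card V" using two_le_card_if_distinct[OF _ assms(2,3)] by blast
  then show ?thesis
    by (rule edge_conn_le[OF g _ cut_edges_subset cut_disconnects[OF assms(2-5)]])
qed

(* Isolating a vertex: edge connectivity is at most every degree. *)
lemma edge_conn_le_degree:
  assumes g: "graph V E" and "v \<in> V" and "2 \<le> card V"
  shows "edge_conn V E \<le> degree E v"
proof -
  obtain w where "w \<in> V" "w \<noteq> v" using obtain_other_element[OF assms(3,2)] .
  then have "edge_conn V E \<le> card (cut_edges E {v})"
    using edge_conn_le_cut[OF g assms(2)] by simp
  also have "\<dots> \<le> degree E v"
    unfolding degree_def
    by (rule card_mono) (use graph_finite_edges[OF g] in \<open>auto simp: cut_edges_def edges_between_def\<close>)
  finally show ?thesis .
qed

lemma prod_edge_iff: "{(x, u), (y, v)} \<in> prod_edges EG EH \<longleftrightarrow> {x, y} \<in> EG \<and> {u, v} \<in> EH"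
proof
  assume "{(x, u), (y, v)} \<in> prod_edges EG EH"
  then obtain x' y' u' v' where "{(x, u), (y, v)} = {(x', u'), (y', v')}" "{x', y'} \<in> EG" "{u', v'} \<in> EH"
    unfolding prod_edges_def by blast
  then show "{x, y} \<in> EG \<and> {u, v} \<in> EH" by (auto simp: doubleton_eq_iff insert_commute)
qed (auto simp: prod_edges_def)

lemma graph_prod:
  assumes gG: "graph VG EG" and gH: "graph VH EH"
  shows "graph (prod_verts VG VH) (prod_edges EG EH)"
proof -
  have "e \<subseteq> VG \<times> VH \<and> card e = 2" if "e \<in> prod_edges EG EH" for e
    using that graph_edge_ends[OF gG] graph_edge_ends[OF gH] unfolding prod_edges_def by auto
  then show ?thesis using gG gH unfolding graph_def prod_verts_def by auto
qed

lemma degree_prod_le: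
  assumes gG: "graph VG EG" and gH: "graph VH EH"
  shows "degree (prod_edges EG EH) (x, u) \<le> degree EG x * degree EH u"
proof -
  let ?join = "\<lambda>(y, v). {(x, u), (y, v)}"
  have "{e \<in> prod_edges EG EH. (x, u) \<in> e} \<subseteq> ?join ` (nbr EG x \<times> nbr EH u)"
  proof
    fix e assume e: "e \<in> {e \<in> prod_edges EG EH. (x, u) \<in> e}"
    then obtain a b c d where "e = {(a, b), (c, d)}" unfolding prod_edges_def by blast
    then have "\<exists>y v. e = {(x, u), (y, v)}" using e by (auto simp: insert_commute)
    then obtain y v where "e = {(x, u), (y, v)}" by blast
    with e have "e = {(x, u), (y, v)}" "{x, y} \<in> EG" "{u, v} \<in> EH" by (simp_all add: prod_edge_iff)
    then show "e \<in> ?join ` (nbr EG x \<times> nbr EH u)" unfolding nbr_def by force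
  qed
  moreover have fin: "finite (nbr EG x \<times> nbr EH u)" using finite_nbr[OF gG] finite_nbr[OF gH] by simp
  ultimately have "degree (prod_edges EG EH) (x, u) \<le> card (?join ` (nbr EG x \<times> nbr EH u))"
    unfolding degree_def by (intro card_mono) auto
  also have "\<dots> \<le> card (nbr EG x \<times> nbr EH u)" by (rule card_image_le[OF fin])
  finally show ?thesis
    by (simp add: degree_eq_card_nbr[OF gG] degree_eq_card_nbr[OF gH] card_cartesian_product)
qed

(* Lifting a cut: the edges of G \<times> H leaving A \<times> V(H) correspond bijectively to pairs of an
   edge of G leaving A and an orientation of an edge of H. *)
lemma card_cut_prod:
  fixes EG :: "'a set set" and EH :: "'b set set"
  assumes gH: "graph VH EH"
  shows "card (cut_edges (prod_edges EG EH) (A \<times> VH)) = card (cut_edges EG A) * (2 * card EH)"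
proof -
  let ?regroup = "\<lambda>((x, y), (u, v)). ((x, u), (y, v))"
  have regroup: "edges_between (prod_edges EG EH) (A \<times> VH) (- (A \<times> VH))
        = ?regroup ` (edges_between EG A (- A) \<times> darts EH)"
  proof (rule set_eqI)
    fix z :: "('a \<times> 'b) \<times> ('a \<times> 'b)"
    obtain x u y v where z: "z = ((x, u), (y, v))" by (metis prod.exhaust)
    have "z \<in> edges_between (prod_edges EG EH) (A \<times> VH) (- (A \<times> VH))
          \<longleftrightarrow> {x, y} \<in> EG \<and> x \<in> A \<and> y \<notin> A \<and> {u, v} \<in> EH"
      using graph_edge_ends[OF gH] unfolding z edges_between_def by (auto simp: prod_edge_iff)
    also have "\<dots> \<longleftrightarrow> z \<in> ?regroup ` (edges_between EG A (- A) \<times> darts EH)"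
      unfolding z edges_between_def darts_def by (auto simp: image_iff)
    finally show "z \<in> edges_between (prod_edges EG EH) (A \<times> VH) (- (A \<times> VH))
                  \<longleftrightarrow> z \<in> ?regroup ` (edges_between EG A (- A) \<times> darts EH)" .
  qed
  have "inj_on ?regroup (edges_between EG A (- A) \<times> darts EH)" by (auto simp: inj_on_def)
  then have "card (cut_edges (prod_edges EG EH) (A \<times> VH))
             = card (edges_between EG A (- A) \<times> darts EH)"
    unfolding card_cut_edges regroup by (rule card_image)
  then show ?thesis by (simp add: card_cut_edges card_cartesian_product card_darts[OF gH])
qed

lemma crossing_arith:
  fixes a b n d :: nat
  assumes "1 \<le> a" and "a + b \<le> n" and "n < 2 * d"
  shows "d \<le> a * (d - b) + b * (d - a)"
proof (cases "d \<le> a \<or> d \<le> b")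
  case True
  then show ?thesis
  proof
    assume "d \<le> a"
    then have "a \<le> a * (d - b)" using assms by simp
    then show ?thesis using \<open>d \<le> a\<close> by linarith
  next
    assume "d \<le> b"
    then have "b \<le> b * (d - a)" using assms by simp
    then show ?thesis using \<open>d \<le> b\<close> by linarith
  qed
next
  case False
  then have "int (a * (d - b) + b * (d - a)) = int a * (int d - int b) + int b * (int d - int a)"
    by (simp add: of_nat_diff)
  also have "\<dots> = int d + ((int a - 1) * (int d - int b) + int b * (int d - int a - 1))"
    by (simp add: algebra_simps)
  finally have "int (a * (d - b) + b * (d - a))
                = int d + ((int a - 1) * (int d - int b) + int b * (int d - int a - 1))" .
  moreover have "(int a - 1) * (int d - int b) \<ge> 0" and "int b * (int d - int a - 1) \<ge> 0"
    using assms False by simp_all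
  ultimately show ?thesis by linarith
qed

(* Each
   count is bounded below twice by card_edges_between_ge; which pair of bounds suffices
   depends on whether |P| + |Q| \<le> |V|. *)
lemma dense_crossing_bound:
  assumes g: "graph V E" and dense: "card V < 2 * d" and deg: "\<forall>u\<in>V. d \<le> degree E u"
    and P: "P \<subseteq> V" "P \<noteq> {}" "P \<noteq> V" and Q: "Q \<subseteq> V"
  shows "d \<le> card (edges_between E P (V - Q)) + card (edges_between E (V - P) Q)"
proof -
  have finV: "finite V" using g unfolding graph_def by simp
  define a b n where "a = card P" and "b = card Q" and "n = card V"
  have compl: "card (V - P) = n - a" "card (V - Q) = n - b"
    unfolding a_def b_def n_def using finV P Q by (simp_all add: card_Diff_subset finite_subset)
  have "V - (V - P) = P" "V - (V - Q) = Q" using P Q by auto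
  have bound1: "a * (d - b) \<le> card (edges_between E P (V - Q))"
    using card_edges_between_ge[OF g P(1) _ deg, of "V - Q"] \<open>V - (V - Q) = Q\<close> a_def b_def n_def by simp
  have bound2: "b * (d - a) \<le> card (edges_between E (V - P) Q)"
    using card_edges_between_ge[OF g Q _ deg, of "V - P"] \<open>V - (V - P) = P\<close> a_def b_def n_def
    by (simp add: card_edges_between_sym)
  have bound3: "(n - b) * (d - (n - a)) \<le> card (edges_between E P (V - Q))"
    using card_edges_between_ge[OF g _ P(1) deg, of "V - Q"] compl
    by (simp add: card_edges_between_sym)
  have bound4: "(n - a) * (d - (n - b)) \<le> card (edges_between E (V - P) Q)"
    using card_edges_between_ge[OF g _ Q deg, of "V - P"] compl by simp
  have "1 \<le> a" using P finV unfolding a_def b_def n_def by (simp add: Suc_le_eq card_gt_0_iff finite_subset)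
  moreover have "a < n" using P finV unfolding a_def b_def n_def by (simp add: psubset_card_mono)
  moreover have "b \<le> n" using Q finV unfolding a_def b_def n_def by (simp add: card_mono)
  moreover have "n < 2 * d" using dense unfolding a_def b_def n_def .
  ultimately show ?thesis
  proof (cases "a + b \<le> n")
    case True
    then show ?thesis using crossing_arith[OF \<open>1 \<le> a\<close> True \<open>n < 2 * d\<close>] bound1 bound2 by linarith
  next
    case False
    then have "1 \<le> n - a" "(n - a) + (n - b) \<le> n" using \<open>a < n\<close> \<open>b \<le> n\<close> by auto
    from crossing_arith[OF this \<open>n < 2 * d\<close>] show ?thesis using bound3 bound4 by linarith
  qed
qed

definition fibre :: "('a \<times> 'b) set \<Rightarrow> 'a \<Rightarrow> 'b set" where
  "fibre S x = {u. (x, u) \<in> S}"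

definition between_fibres :: "('a \<times> 'b) set set \<Rightarrow> 'a \<Rightarrow> 'a \<Rightarrow> ('a \<times> 'b) set set" where
  "between_fibres F x y = {e \<in> F. \<exists>u v. e = {(x, u), (y, v)}}"

(* If the fibre of S over x is split, every edge xy of G carries at least \<delta>(H) cut edges of
   S between the fibres over x and y: apply the counting lemma to the fibres over x and y. *)
lemma between_fibres_bound:
  assumes gG: "graph VG EG" and gH: "graph VH EH" and dense: "card VH < 2 * min_degree VH EH"
    and xy: "{x, y} \<in> EG" and S: "S \<subseteq> VG \<times> VH" and split: "fibre S x \<noteq> {}" "fibre S x \<noteq> VH"
  shows "min_degree VH EH \<le> card (between_fibres (cut_edges (prod_edges EG EH) S) x y)"
proof -
  let ?C = "between_fibres (cut_edges (prod_edges EG EH) S) x y"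
  let ?join = "\<lambda>(u, v). {(x, u), (y, v)}"
  define E1 where "E1 = edges_between EH (fibre S x) (VH - fibre S y)"
  define E2 where "E2 = edges_between EH (VH - fibre S x) (fibre S y)"
  have finVH: "finite VH" using gH unfolding graph_def by simp
  have fibre_sub: "fibre S z \<subseteq> VH" for z using S unfolding fibre_def by auto
  have deg: "\<forall>u\<in>VH. min_degree VH EH \<le> degree EH u" using min_degree_le[OF finVH] by blast
  have "min_degree VH EH \<le> card E1 + card E2"
    unfolding E1_def E2_def by (rule dense_crossing_bound[OF gH dense deg fibre_sub split fibre_sub])
  also have "card E1 + card E2 = card (E1 \<union> E2)"
  proof (rule card_Un_disjoint[symmetric])
    show "finite E1" "finite E2" unfolding E1_def E2_def by (rule finite_edges_between[OF gH])+
    show "E1 \<inter> E2 = {}" unfolding E1_def E2_def edges_between_def by auto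
  qed
  also have "\<dots> = card (?join ` (E1 \<union> E2))"
    using graph_edge_ends(3)[OF gG xy] by (intro card_image[symmetric]) (auto simp: inj_on_def doubleton_eq_iff)
  also have "\<dots> \<le> card ?C"
  proof (rule card_mono)
    show "finite ?C"
      using graph_finite_edges[OF graph_prod[OF gG gH]] cut_edges_subset
      unfolding between_fibres_def by (auto intro: finite_subset)
    show "?join ` (E1 \<union> E2) \<subseteq> ?C"
    proof
      fix e assume "e \<in> ?join ` (E1 \<union> E2)"
      then obtain u v where e: "e = {(x, u), (y, v)}" "{u, v} \<in> EH" and
        crossing: "(x, u) \<in> S \<and> (y, v) \<notin> S \<or> (x, u) \<notin> S \<and> (y, v) \<in> S"
        unfolding E1_def E2_def edges_between_def fibre_def by auto
      have "e \<in> prod_edges EG EH" using e xy by (simp add: prod_edge_iff)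
      then have "e \<in> cut_edges (prod_edges EG EH) S"
        using crossing cut_edgesI unfolding e by (metis insert_commute)
      then show "e \<in> ?C" unfolding between_fibres_def e by blast
    qed
  qed
  finally show ?thesis .
qed

(* Summing over the neighbours of a vertex with a split fibre. *)
lemma cut_ge_at_split_fibre:
  assumes gG: "graph VG EG" and gH: "graph VH EH" and dense: "card VH < 2 * min_degree VH EH"
    and S: "S \<subseteq> VG \<times> VH" and x: "x \<in> VG" and split: "fibre S x \<noteq> {}" "fibre S x \<noteq> VH"
  shows "min_degree VG EG * min_degree VH EH \<le> card (cut_edges (prod_edges EG EH) S)"
proof -
  let ?C = "cut_edges (prod_edges EG EH) S" and ?d = "min_degree VH EH"
  have finVG: "finite VG" using gG unfolding graph_def by simp
  have not_x: "y \<noteq> x" if "y \<in> nbr EG x" for y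
    using that graph_edge_ends(3)[OF gG] unfolding nbr_def by blast
  have "min_degree VG EG * ?d \<le> card (nbr EG x) * ?d"
    using min_degree_le[OF finVG x, of EG] degree_eq_card_nbr[OF gG] by simp
  also have "\<dots> \<le> (\<Sum>y\<in>nbr EG x. card (between_fibres ?C x y))"
    using sum_mono[of "nbr EG x" "\<lambda>_. ?d"] between_fibres_bound[OF gG gH dense _ S split]
    unfolding nbr_def by fastforce
  also have "\<dots> = card (\<Union>y\<in>nbr EG x. between_fibres ?C x y)"
  proof (rule card_UN_disjoint[symmetric])
    show "finite (nbr EG x)" by (rule finite_nbr[OF gG])
    show "\<forall>y\<in>nbr EG x. finite (between_fibres ?C x y)"
      using graph_finite_edges[OF graph_prod[OF gG gH]] cut_edges_subset
      unfolding between_fibres_def by (auto intro: finite_subset)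
    show "\<forall>y\<in>nbr EG x. \<forall>y'\<in>nbr EG x. y \<noteq> y' \<longrightarrow>
            between_fibres ?C x y \<inter> between_fibres ?C x y' = {}"
      using not_x unfolding between_fibres_def by (fastforce simp: doubleton_eq_iff)
  qed
  also have "\<dots> \<le> card ?C"
    using graph_finite_edges[OF graph_prod[OF gG gH]] cut_edges_subset
    by (intro card_mono) (auto simp: between_fibres_def intro: finite_subset)
  finally show ?thesis .
qed

(* If no fibre is split, S is a product A \<times> V(H) and its cut is the lift of the cut of A in G. *)
lemma cut_ge_whole_fibres:
  assumes gG: "graph VG EG" and gH: "graph VH EH" and S: "S \<subseteq> VG \<times> VH"
    and p: "p \<in> S" and q: "q \<in> VG \<times> VH" "q \<notin> S"
    and whole: "\<And>x. fibre S x = {} \<or> fibre S x = VH"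
  shows "2 * edge_conn VG EG * card EH \<le> card (cut_edges (prod_edges EG EH) S)"
proof -
  define A where "A = {x. fibre S x = VH}"
  have S_eq: "S = A \<times> VH"
  proof
    show "S \<subseteq> A \<times> VH"
      using S whole unfolding A_def fibre_def by fastforce
    show "A \<times> VH \<subseteq> S" unfolding A_def fibre_def by auto
  qed
  obtain px pu qx qu where pq: "p = (px, pu)" "q = (qx, qu)" by (metis prod.exhaust)
  have "px \<in> A" "px \<in> VG" using p S unfolding S_eq pq by auto
  moreover have "qx \<notin> A" "qx \<in> VG" using q unfolding S_eq pq by auto
  ultimately have "edge_conn VG EG \<le> card (cut_edges EG A)" using edge_conn_le_cut[OF gG] by blast
  then show ?thesis unfolding S_eq card_cut_prod[OF gH] by simp
qed

lemma disconnecting_set_lower_bound: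
  assumes gG: "graph VG EG" and gH: "graph VH EH" and dense: "card VH < 2 * min_degree VH EH"
    and ne: "VG \<times> VH \<noteq> {}" and F: "F \<subseteq> prod_edges EG EH"
    and disc: "\<not> connected_graph (prod_verts VG VH) (prod_edges EG EH - F)"
  shows "min (2 * edge_conn VG EG * card EH) (min_degree VG EG * min_degree VH EH) \<le> card F"
proof -
  let ?PE = "prod_edges EG EH"
  obtain S p q where S: "S \<subseteq> VG \<times> VH" and p: "p \<in> S" and q: "q \<in> VG \<times> VH" "q \<notin> S"
    and cut: "cut_edges ?PE S \<subseteq> F"
    using disconnected_cut[OF graph_prod[OF gG gH] _ disc] ne unfolding prod_verts_def by blast
  have "min (2 * edge_conn VG EG * card EH) (min_degree VG EG * min_degree VH EH)
        \<le> card (cut_edges ?PE S)"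
  proof (cases "\<exists>x\<in>VG. fibre S x \<noteq> {} \<and> fibre S x \<noteq> VH")
    case True
    then obtain x where "x \<in> VG" "fibre S x \<noteq> {}" "fibre S x \<noteq> VH" by blast
    with cut_ge_at_split_fibre[OF gG gH dense S] show ?thesis by fastforce
  next
    case False
    have "fibre S x = {} \<or> fibre S x = VH" for x
      using False S unfolding fibre_def by blast
    with cut_ge_whole_fibres[OF gG gH S p q] show ?thesis by fastforce
  qed
  also have "\<dots> \<le> card F"
    using card_mono[OF _ cut] F graph_finite_edges[OF graph_prod[OF gG gH]] finite_subset by blast
  finally show ?thesis .
qed

lemma edge_conn_prod_le_lifted_cut:
  assumes gG: "graph VG EG" and gH: "graph VH EH" and "2 \<le> card VG" and "u \<in> VH"
  shows "edge_conn (prod_verts VG VH) (prod_edges EG EH) \<le> 2 * edge_conn VG EG * card EH"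
proof -
  obtain FG where FG: "FG \<subseteq> EG" "\<not> connected_graph VG (EG - FG)" "card FG = edge_conn VG EG"
    using edge_conn_attained[OF gG assms(3)] .
  have "VG \<noteq> {}" using assms(3) by auto
  then obtain S px qx where "px \<in> S" "qx \<in> VG" "qx \<notin> S" "S \<subseteq> VG" "cut_edges EG S \<subseteq> FG"
    using disconnected_cut[OF gG _ FG(2)] by metis
  then have "edge_conn (prod_verts VG VH) (prod_edges EG EH)
             \<le> card (cut_edges (prod_edges EG EH) (S \<times> VH))"
    using edge_conn_le_cut[OF graph_prod[OF gG gH], of "(px, u)" "(qx, u)"] assms(4)
    unfolding prod_verts_def by auto
  also have "\<dots> = card (cut_edges EG S) * (2 * card EH)" by (rule card_cut_prod[OF gH])
  also have "\<dots> \<le> card FG * (2 * card EH)"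
    using card_mono[OF _ \<open>cut_edges EG S \<subseteq> FG\<close>] FG(1) graph_finite_edges[OF gG] finite_subset
    by (metis mult_le_mono1)
  finally show ?thesis using FG(3) by simp
qed

theorem theorem1:
  fixes VG :: "'a set" and EG :: "'a set set" and VH :: "'b set" and EH :: "'b set set"
  assumes "graph VG EG" and "VG \<noteq> {}"
    and "graph VH EH" and "VH \<noteq> {}"
    and "real (min_degree VH EH) > real (card VH) / 2"
  shows "edge_conn (prod_verts VG VH) (prod_edges EG EH) =
           min (2 * edge_conn VG EG * card EH) (min_degree VG EG * min_degree VH EH)"
proof -
  note gG = assms(1) and gH = assms(3)
  let ?P = "prod_verts VG VH" and ?PE = "prod_edges EG EH"
  have gP: "graph ?P ?PE" by (rule graph_prod[OF gG gH])
  have fin: "finite VG" "finite VH" using gG gH unfolding graph_def by simp_all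
  have dense: "card VH < 2 * min_degree VH EH" using assms(5) by linarith
  obtain x where x: "x \<in> VG" "degree EG x = min_degree VG EG"
    using min_degree_attained[OF fin(1) assms(2)] .
  obtain u where u: "u \<in> VH" "degree EH u = min_degree VH EH"
    using min_degree_attained[OF fin(2) assms(4)] .
  have "1 \<le> card VG" using fin(1) assms(2) by (simp add: Suc_le_eq card_gt_0_iff)
  moreover have "2 \<le> card VH" using card_ge_2_if_degree_pos[OF gH, of u] u(2) dense by simp
  ultimately have "1 * 2 \<le> card VG * card VH" by (rule mult_le_mono)
  then have two: "2 \<le> card ?P" unfolding prod_verts_def card_cartesian_product by simp
  have upper_deg: "edge_conn ?P ?PE \<le> min_degree VG EG * min_degree VH EH"
    using edge_conn_le_degree[OF gP _ two, of "(x, u)"] degree_prod_le[OF gG gH, of x u] x u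
    unfolding prod_verts_def by simp
  have upper_cut: "edge_conn ?P ?PE \<le> 2 * edge_conn VG EG * card EH"
  proof (cases "2 \<le> card VG")
    case True
    then show ?thesis by (rule edge_conn_prod_le_lifted_cut[OF gG gH _ u(1)])
  next
    case False
    then have "degree EG x = 0" using card_ge_2_if_degree_pos[OF gG, of x] by blast
    then have "min_degree VG EG = 0" using x(2) by simp
    then show ?thesis using upper_deg by simp
  qed
  have "min (2 * edge_conn VG EG * card EH) (min_degree VG EG * min_degree VH EH) \<le> edge_conn ?P ?PE"
    using disconnecting_set_lower_bound[OF gG gH dense] assms(2,4)
    by (intro edge_conn_ge[OF gP two]) simp
  then show ?thesis using upper_deg upper_cut by linarith
qed

end
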